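(* For all $M>0$ and $B>0$ there exists $C(M,B)>0$ with the following property: if for some $\varepsilon\in(\varepsilon_j)_{j\in\mathbb N}$ and $T\in(0,\infty]$ the classical solution $u_\varepsilon$ of the regularized problem satisfies $$u_{0\varepsilon}\le M\ \text{in }\Omega\qquad\text{and}\qquad\int_0^T\int_\Omega|\nabla u_\varepsilon|^2\le B,$$ then $u_\varepsilon\le C(M,B)$ in $\Omega\times[0,T)$.
   Context: $\Omega\subset\mathbb{R}^N$ is a bounded smooth domain; $(\varepsilon_j)\subset(0,1)$ decreases to $0$; $\rho_\varepsilon(z):=\min\{z,1/\varepsilon\}$; $(u_{0\varepsilon})_{\varepsilon\in(\varepsilon_j)}\subset C^3(\bar\Omega)$ with $u_{0\varepsilon}\ge\varepsilon$ in $\Omega$, $u_{0\varepsilon}=\varepsilon$ and $\Delta u_{0\varepsilon}=-\int_\Omega|\nabla u_{0\varepsilon}|^2$ on $\partial\Omega$. $u_\varepsilon\in C^{2,1}(\bar\Omega\times[0,\infty))$ denotes the classical solution of $u_{\varepsilon t}=u_\varepsilon\Delta u_\varepsilon+u_\varepsilon\rho_\varepsilon(\int_\Omega|\nabla u_\varepsilon|^2)$ in $\Omega\times(0,\infty)$, $u_\varepsilon=\varepsilon$ on $\partial\Omega$, $u_\varepsilon(\cdot,0)=u_{0\varepsilon}$. The constant $C(M,B)$ does not depend on $\varepsilon$ or $T$. *)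

theory Defs
  imports "HOL-Analysis.Analysis"
begin

definition pd :: "'n::finite \<Rightarrow> (real^'n \<Rightarrow> real) \<Rightarrow> real^'n \<Rightarrow> real" where
  "pd i f x = deriv (\<lambda>s. f (x + s *\<^sub>R axis i 1)) 0"

primrec iter_pd :: "'n::finite list \<Rightarrow> (real^'n \<Rightarrow> real) \<Rightarrow> real^'n \<Rightarrow> real" where
  "iter_pd [] f = f"
| "iter_pd (i # is) f = pd i (iter_pd is f)"

definition grad :: "(real^'n::finite \<Rightarrow> real) \<Rightarrow> real^'n \<Rightarrow> real^'n" where
  "grad f x = (\<chi> i. pd i f x)"

definition lap :: "(real^'n::finite \<Rightarrow> real) \<Rightarrow> real^'n \<Rightarrow> real" where
  "lap f x = (\<Sum>i\<in>UNIV. pd i (pd i f) x)"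

definition smooth_on :: "(real^'n::finite) set \<Rightarrow> (real^'n \<Rightarrow> real) \<Rightarrow> bool" where
  "smooth_on U f \<longleftrightarrow> (\<forall>is. \<forall>x\<in>U. iter_pd is f differentiable at x)"

definition smooth_bounded_domain :: "(real^'n::finite) set \<Rightarrow> bool" where
  "smooth_bounded_domain \<Omega> \<longleftrightarrow> open \<Omega> \<and> connected \<Omega> \<and> bounded \<Omega> \<and> \<Omega> \<noteq> {} \<and>
     (\<forall>x0\<in>frontier \<Omega>. \<exists>r>0. \<exists>\<phi>. smooth_on (ball x0 r) \<phi> \<and>
        (\<forall>x\<in>ball x0 r. x \<in> \<Omega> \<longleftrightarrow> \<phi> x < 0) \<and>
        (\<forall>x\<in>ball x0 r. \<phi> x = 0 \<longrightarrow> grad \<phi> x \<noteq> 0))"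

definition Ck_closure :: "nat \<Rightarrow> (real^'n::finite) set \<Rightarrow> (real^'n \<Rightarrow> real) \<Rightarrow> bool" where
  "Ck_closure k \<Omega> f \<longleftrightarrow> continuous_on (closure \<Omega>) f \<and>
     (\<forall>is. length is < k \<longrightarrow> (\<forall>x\<in>\<Omega>. iter_pd is f differentiable at x)) \<and>
     (\<forall>is. length is \<le> k \<longrightarrow>
        (\<exists>g. continuous_on (closure \<Omega>) g \<and> (\<forall>x\<in>\<Omega>. g x = iter_pd is f x)))"

definition C21 :: "(real^'n::finite) set \<Rightarrow> (real^'n \<Rightarrow> real \<Rightarrow> real) \<Rightarrow> bool" where
  "C21 \<Omega> u \<longleftrightarrow> continuous_on (closure \<Omega> \<times> {0..}) (\<lambda>p. u (fst p) (snd p)) \<and>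
     (\<forall>x\<in>\<Omega>. \<forall>t>0. u x differentiable at t) \<and>
     (\<exists>g. continuous_on (closure \<Omega> \<times> {0..}) g \<and>
        (\<forall>x\<in>\<Omega>. \<forall>t>0. g (x, t) = deriv (u x) t)) \<and>
     (\<forall>is. length is < 2 \<longrightarrow>
        (\<forall>x\<in>\<Omega>. \<forall>t>0. iter_pd is (\<lambda>y. u y t) differentiable at x)) \<and>
     (\<forall>is. length is \<le> 2 \<longrightarrow>
        (\<exists>g. continuous_on (closure \<Omega> \<times> {0..}) g \<and>
           (\<forall>x\<in>\<Omega>. \<forall>t>0. g (x, t) = iter_pd is (\<lambda>y. u y t) x)))"

definition dirichlet :: "(real^'n::finite) set \<Rightarrow> (real^'n \<Rightarrow> real) \<Rightarrow> real" where
  "dirichlet \<Omega> f = integral \<Omega> (\<lambda>x. (norm (grad f x))\<^sup>2)"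

definition rho :: "real \<Rightarrow> real \<Rightarrow> real" where
  "rho \<epsilon> z = min z (1 / \<epsilon>)"

definition init_ok :: "(real^'n::finite) set \<Rightarrow> real \<Rightarrow> (real^'n \<Rightarrow> real) \<Rightarrow> bool" where
  "init_ok \<Omega> \<epsilon> u0 \<longleftrightarrow> Ck_closure 3 \<Omega> u0 \<and> (\<forall>x\<in>\<Omega>. u0 x \<ge> \<epsilon>) \<and>
     (\<forall>x\<in>frontier \<Omega>. u0 x = \<epsilon> \<and>
        ((\<lambda>y. lap u0 y) \<longlongrightarrow> - dirichlet \<Omega> u0) (at x within \<Omega>))"

definition classical_sol ::
  "(real^'n::finite) set \<Rightarrow> real \<Rightarrow> (real^'n \<Rightarrow> real) \<Rightarrow> (real^'n \<Rightarrow> real \<Rightarrow> real) \<Rightarrow> bool" where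
  "classical_sol \<Omega> \<epsilon> u0 u \<longleftrightarrow> C21 \<Omega> u \<and>
     (\<forall>x\<in>\<Omega>. \<forall>t>0. deriv (u x) t =
         u x t * lap (\<lambda>y. u y t) x + u x t * rho \<epsilon> (dirichlet \<Omega> (\<lambda>y. u y t))) \<and>
     (\<forall>x\<in>frontier \<Omega>. \<forall>t\<ge>0. u x t = \<epsilon>) \<and>
     (\<forall>x\<in>closure \<Omega>. u x 0 = u0 x)"

end

theory Submission
  imports Defs
begin

text \<open>Put \<open>G(t) = \<integral>\<^sub>0\<^sup>t \<rho>\<^sub>\<epsilon>(\<integral>\<^sub>\<Omega> |\<nabla>u(\<cdot>,s)|\<^sup>2) ds\<close>; then \<open>G \<le> B\<close> and
  \<open>w = u e\<^sup>-\<^sup>G\<close> solves \<open>w\<^sub>t = u \<Delta>w\<close>. Since \<open>u > 0\<close> at a large value of \<open>w\<close>, \<open>w\<close> obeys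
  the parabolic maximum principle, so \<open>w \<le> max M 1\<close> (the boundary value is \<open>\<epsilon> < 1\<close>),
  and hence \<open>u \<le> max M 1 \<cdot> e\<^sup>B\<close>.\<close>

lemma has_real_derivative_along_line:
  fixes f :: "'a::real_normed_vector \<Rightarrow> real"
  assumes "(f has_derivative f') (at (a + s *\<^sub>R v))"
  shows "((\<lambda>r. f (a + r *\<^sub>R v)) has_real_derivative f' v) (at s)"
proof -
  have "((\<lambda>r. a + r *\<^sub>R v) has_derivative (\<lambda>h. h *\<^sub>R v)) (at s)"
    by (auto intro!: derivative_eq_intros)
  then have "((\<lambda>r. f (a + r *\<^sub>R v)) has_derivative (\<lambda>h. f' (h *\<^sub>R v))) (at s)"
    using has_derivative_compose assms by blast
  moreover have "(\<lambda>h. f' (h *\<^sub>R v)) = (*) (f' v)"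
    using linear_scale[OF has_derivative_linear[OF assms]] by (auto simp: fun_eq_iff)
  ultimately show ?thesis by (simp add: has_field_derivative_def)
qed

lemma pd_has_real_derivative_along_axis:
  fixes f :: "real^'n::finite \<Rightarrow> real"
  assumes "f differentiable at (x + s *\<^sub>R axis i 1)"
  shows "((\<lambda>r. f (x + r *\<^sub>R axis i 1)) has_real_derivative pd i f (x + s *\<^sub>R axis i 1)) (at s)"
proof -
  obtain f' where f': "(f has_derivative f') (at (x + s *\<^sub>R axis i 1))"
    using assms differentiable_def by blast
  have "((\<lambda>r. f (x + s *\<^sub>R axis i 1 + r *\<^sub>R axis i 1)) has_real_derivative f' (axis i 1)) (at 0)"
    using has_real_derivative_along_line[of f f' "x + s *\<^sub>R axis i 1" 0] f' by simp
  then have "pd i f (x + s *\<^sub>R axis i 1) = f' (axis i 1)"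
    unfolding pd_def by (rule DERIV_imp_deriv)
  then show ?thesis using has_real_derivative_along_line[OF f'] by simp
qed

lemma DERIV_nonneg_at_left_max:
  fixes f :: "real \<Rightarrow> real"
  assumes "(f has_real_derivative f') (at x)" and "a < x" and "\<forall>y\<in>{a..x}. f y \<le> f x"
  shows "f' \<ge> 0"
proof (rule ccontr)
  assume "\<not> f' \<ge> 0"
  then obtain d where d: "d > 0" "\<forall>h>0. h < d \<longrightarrow> f x < f (x - h)"
    using DERIV_neg_dec_left[OF assms(1)] by force
  define h where "h = min d (x - a) / 2"
  have "0 < h" "h < d" "h < x - a" using d assms(2) unfolding h_def by auto
  then have "x - h \<in> {a..x}" by simp
  then show False using d \<open>0 < h\<close> \<open>h < d\<close> assms(3) by force
qed

lemma pd_pd_nonpos_at_local_max: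
  fixes f :: "real^'n::finite \<Rightarrow> real"
  assumes S: "open S" "x \<in> S" and max: "\<forall>y\<in>S. f y \<le> f x"
    and df: "\<forall>y\<in>S. f differentiable at y" and dpf: "pd i f differentiable at x"
  shows "pd i (pd i f) x \<le> 0"
proof (rule ccontr)
  assume "\<not> ?thesis"
  then have curv: "pd i (pd i f) x > 0" by simp
  obtain r where r: "r > 0" "ball x r \<subseteq> S" using S open_contains_ball by blast
  define \<phi> where "\<phi> s = f (x + s *\<^sub>R axis i 1)" for s
  define \<psi> where "\<psi> s = pd i f (x + s *\<^sub>R axis i 1)" for s
  have inS: "x + s *\<^sub>R axis i 1 \<in> S" if "\<bar>s\<bar> < r" for s
    using that r by (auto simp: dist_norm)
  have d\<phi>: "(\<phi> has_real_derivative \<psi> s) (at s)" if "\<bar>s\<bar> < r" for s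
    unfolding \<phi>_def \<psi>_def using pd_has_real_derivative_along_axis df inS[OF that] by blast
  have d\<psi>: "(\<psi> has_real_derivative pd i (pd i f) x) (at 0)"
    using pd_has_real_derivative_along_axis[of "pd i f" x 0 i] dpf unfolding \<psi>_def by simp
  have "\<psi> 0 = 0"
    by (rule DERIV_local_max[OF d\<phi>[of 0] r(1)]) (use r(1) inS max in \<open>auto simp: \<phi>_def\<close>)
  then obtain d where d: "d > 0" "\<forall>h>0. h < d \<longrightarrow> 0 < \<psi> h"
    using DERIV_pos_inc_right[OF d\<psi> curv] by force
  define h where "h = min d r / 2"
  have h: "0 < h" "h < d" "h < r" using d r unfolding h_def by auto
  obtain z where z: "0 < z" "z < h" "\<phi> h - \<phi> 0 = h * \<psi> z"
    using MVT2[of 0 h \<phi> \<psi>] d\<phi> h by force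
  have "\<psi> z > 0" using d z h by simp
  then have "\<phi> h > \<phi> 0" using mult_pos_pos[OF h(1)] z(3) by fastforce
  moreover have "\<phi> h \<le> \<phi> 0" using max inS[of h] h unfolding \<phi>_def by simp
  ultimately show False by simp
qed

lemma lap_nonpos_at_local_max:
  fixes f :: "real^'n::finite \<Rightarrow> real"
  assumes "open S" "x \<in> S" "\<forall>y\<in>S. f y \<le> f x"
    and "\<forall>y\<in>S. f differentiable at y" and "\<forall>i. pd i f differentiable at x"
  shows "lap f x \<le> 0"
  unfolding lap_def using pd_pd_nonpos_at_local_max[OF assms(1-4)] assms(5) by (simp add: sum_nonpos)

lemma integrable_on_continuous_on_closure:
  fixes f :: "'a::euclidean_space \<Rightarrow> real"
  assumes "bounded \<Omega>" "open \<Omega>" "continuous_on (closure \<Omega>) f"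
  shows "f integrable_on \<Omega>"
proof -
  have \<Omega>: "\<Omega> \<in> sets lebesgue" using assms(2) by (simp add: borel_open sets_completionI_sets)
  have "compact (f ` closure \<Omega>)"
    using assms(1,3) compact_closure compact_continuous_image by blast
  then obtain b where b: "\<forall>x\<in>closure \<Omega>. norm (f x) \<le> b"
    using compact_imp_bounded bounded_iff by (metis image_eqI)
  have "f \<in> borel_measurable (lebesgue_on \<Omega>)"
    using continuous_imp_measurable_on_sets_lebesgue continuous_on_subset[OF assms(3) closure_subset] \<Omega>
    by blast
  moreover have "(\<lambda>_. b) integrable_on \<Omega>"
    using integrable_on_const lmeasurable_open[OF assms(1,2)] by blast
  ultimately have "f absolutely_integrable_on \<Omega>"
    using measurable_bounded_by_integrable_imp_absolutely_integrable[OF _ \<Omega>] b closure_subset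
    by blast
  then show ?thesis using set_lebesgue_integral_eq_integral(1) by blast
qed

lemma continuous_on_parametric_integral:
  fixes h :: "'a::euclidean_space \<times> real \<Rightarrow> real"
  assumes bO: "bounded \<Omega>" and oO: "open \<Omega>" and hc: "continuous_on (closure \<Omega> \<times> {0..}) h"
  shows "continuous_on {0..} (\<lambda>t. integral \<Omega> (\<lambda>x. h (x, t)))"
  unfolding continuous_on_iff
proof (intro ballI allI impI)
  fix t e :: real
  assume t: "t \<in> {0..}" and e: "0 < e"
  define K where "K = closure \<Omega> \<times> {0..t+1}"
  have "compact K" unfolding K_def using bO by (simp add: compact_Times compact_closure)
  moreover have "continuous_on K h" unfolding K_def by (rule continuous_on_subset[OF hc]) auto
  ultimately have "uniformly_continuous_on K h" by (intro compact_uniformly_continuous)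
  moreover define m where "m = measure lebesgue \<Omega>"
  have m: "m \<ge> 0" unfolding m_def by simp
  define e' where "e' = e / (m + 1)"
  have "e' > 0" unfolding e'_def using e m by simp
  ultimately obtain d where d: "d > 0" "\<forall>p\<in>K. \<forall>q\<in>K. dist q p < d \<longrightarrow> dist (h q) (h p) < e'"
    unfolding uniformly_continuous_on_def by blast
  have int: "(\<lambda>x. h (x, r)) integrable_on \<Omega>" if "r \<ge> 0" for r
  proof (rule integrable_on_continuous_on_closure[OF bO oO])
    show "continuous_on (closure \<Omega>) (\<lambda>x. h (x, r))"
      by (rule continuous_on_compose2[OF hc]) (use that in \<open>auto intro!: continuous_intros\<close>)
  qed
  show "\<exists>d>0. \<forall>s\<in>{0..}. dist s t < d \<longrightarrow>
          dist (integral \<Omega> (\<lambda>x. h (x, s))) (integral \<Omega> (\<lambda>x. h (x, t))) < e"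
  proof (intro exI[of _ "min d 1"] conjI ballI impI)
    fix s :: real assume s: "s \<in> {0..}" "dist s t < min d 1"
    have "norm (h (x, s) - h (x, t)) \<le> e'" if "x \<in> \<Omega>" for x
    proof -
      have "(x, s) \<in> K" "(x, t) \<in> K" "dist (x, s) (x, t) < d"
        using that s t closure_subset unfolding K_def by (auto simp: dist_Pair_Pair dist_real_def)
      then show ?thesis using d(2) by (force simp: dist_norm)
    qed
    moreover have "(\<lambda>x. h (x, s) - h (x, t)) integrable_on \<Omega>"
      using integrable_diff int s t by auto
    moreover have "(\<lambda>x. e') integrable_on \<Omega>"
      using integrable_on_const lmeasurable_open[OF bO oO] by blast
    ultimately have "norm (integral \<Omega> (\<lambda>x. h (x, s) - h (x, t))) \<le> integral \<Omega> (\<lambda>x. e')"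
      by (intro integral_norm_bound_integral)
    also have "\<dots> = e' * m"
      using lmeasure_integral[OF lmeasurable_open[OF bO oO]] integral_mult_right[of \<Omega> e' "\<lambda>_. 1"]
      unfolding m_def by simp
    also have "\<dots> < e" unfolding e'_def using e m by (simp add: field_simps)
    finally show "dist (integral \<Omega> (\<lambda>x. h (x, s))) (integral \<Omega> (\<lambda>x. h (x, t))) < e"
      using integral_diff[OF int int] s t by (simp add: dist_norm)
  qed (use d in simp)
qed

lemma power2_norm_vec: "(norm (v::real^'n::finite))\<^sup>2 = (\<Sum>i\<in>UNIV. (v$i)\<^sup>2)"
  by (simp add: norm_vec_def L2_set_def sum_nonneg)

text \<open>\<^const>\<open>C21\<close> relates the gradient to the solution only for \<open>t > 0\<close>; its continuous
  extension to \<open>t = 0\<close> yields an energy that is continuous on \<open>[0,\<infinity>)\<close>.\<close>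
lemma C21_dirichlet_continuous:
  fixes U :: "real^'n::finite \<Rightarrow> real \<Rightarrow> real"
  assumes "bounded \<Omega>" "open \<Omega>" "C21 \<Omega> U"
  obtains D where "continuous_on {0..} D" "\<forall>t\<ge>0. D t \<ge> 0"
    "\<forall>t>0. dirichlet \<Omega> (\<lambda>y. U y t) = D t"
proof -
  have "\<exists>g. continuous_on (closure \<Omega> \<times> {0..}) g \<and>
      (\<forall>x\<in>\<Omega>. \<forall>t>0. g (x, t) = iter_pd is (\<lambda>y. U y t) x)" if "length is \<le> 2" for "is"
    using assms(3) that unfolding C21_def by blast
  from this[of "[_]"]
  have "\<forall>i. \<exists>g. continuous_on (closure \<Omega> \<times> {0..}) g \<and>
           (\<forall>x\<in>\<Omega>. \<forall>t>0. g (x, t) = pd i (\<lambda>y. U y t) x)" by simp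
  then obtain g where g: "\<forall>i. continuous_on (closure \<Omega> \<times> {0..}) (g i) \<and>
           (\<forall>x\<in>\<Omega>. \<forall>t>0. g i (x, t) = pd i (\<lambda>y. U y t) x)" by metis
  define h where "h p = (\<Sum>i\<in>UNIV. (g i p)\<^sup>2)" for p
  have hc: "continuous_on (closure \<Omega> \<times> {0..}) h"
    unfolding h_def using g by (auto intro!: continuous_intros)
  show ?thesis
  proof
    show "continuous_on {0..} (\<lambda>t. integral \<Omega> (\<lambda>x. h (x, t)))"
      by (rule continuous_on_parametric_integral[OF assms(1,2) hc])
    show "\<forall>t\<ge>0. integral \<Omega> (\<lambda>x. h (x, t)) \<ge> 0"
    proof (intro allI impI integral_nonneg)
      fix t :: real assume "t \<ge> 0"
      show "(\<lambda>x. h (x, t)) integrable_on \<Omega>"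
        by (rule integrable_on_continuous_on_closure[OF assms(1,2)], rule continuous_on_compose2[OF hc])
          (use \<open>t \<ge> 0\<close> in \<open>auto intro!: continuous_intros\<close>)
    qed (simp add: h_def sum_nonneg)
    show "\<forall>t>0. dirichlet \<Omega> (\<lambda>y. U y t) = integral \<Omega> (\<lambda>x. h (x, t))"
      unfolding dirichlet_def h_def grad_def power2_norm_vec using g by (auto intro!: integral_cong)
  qed
qed

lemma integral_le_nn_integral_bound:
  fixes D E :: "real \<Rightarrow> real" and T :: ereal
  assumes cont: "continuous_on {0..} D" and nonneg: "\<forall>t\<ge>0. D t \<ge> 0" and eq: "\<forall>t>0. E t = D t"
    and t: "0 \<le> t" "ereal t < T" and B: "0 \<le> B"
    and bound: "(\<integral>\<^sup>+ s\<in>{s. 0 \<le> s \<and> ereal s < T}. ennreal (E s) \<partial>lborel) \<le> ennreal B"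
  shows "integral {0..t} D \<le> B"
proof -
  have "continuous_on {0..t} D" using cont by (rule continuous_on_subset) auto
  then have "(D has_integral integral {0..t} D) {0..t}"
    by (intro integrable_integral integrable_continuous_real)
  then have "integral\<^sup>N lborel (\<lambda>s. indicator {0..t} s * D s) = integral {0..t} D"
    by (rule nn_integral_has_integral_lebesgue[rotated]) (use nonneg in auto)
  moreover have "integral\<^sup>N lborel (\<lambda>s. indicator {0..t} s * D s)
      = (\<integral>\<^sup>+ s. ennreal (E s) * indicator {0..t} s \<partial>lborel)"
  proof (rule nn_integral_cong_AE)
    show "AE s in lborel. ennreal (indicator {0..t} s * D s) = ennreal (E s) * indicator {0..t} s"
      using AE_lborel_singleton[of 0]
    proof (rule AE_mp, intro AE_I2 impI)
      fix s :: real assume "s \<noteq> 0"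
      then show "ennreal (indicator {0..t} s * D s) = ennreal (E s) * indicator {0..t} s"
        using eq by (cases "s \<in> {0..t}") auto
    qed
  qed
  moreover have "\<dots> \<le> (\<integral>\<^sup>+ s\<in>{s. 0 \<le> s \<and> ereal s < T}. ennreal (E s) \<partial>lborel)"
  proof (rule nn_integral_mono)
    fix s :: real
    show "ennreal (E s) * indicator {0..t} s \<le> ennreal (E s) * indicator {s. 0 \<le> s \<and> ereal s < T} s"
      using t by (cases "s \<in> {0..t}") (auto simp: indicator_def le_less_trans[of "ereal s" "ereal t" T])
  qed
  ultimately have "ennreal (integral {0..t} D) \<le> ennreal B" using bound by simp
  then show ?thesis using B by simp
qed

lemma tilted_solution_no_interior_max:
  fixes U :: "real^'n::finite \<Rightarrow> real \<Rightarrow> real" and G g :: "real \<Rightarrow> real"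
  assumes oO: "open \<Omega>"
    and diff_t: "\<forall>x\<in>\<Omega>. \<forall>s>0. U x differentiable at s"
    and diff_x: "\<forall>x\<in>\<Omega>. \<forall>s>0. (\<lambda>y. U y s) differentiable at x \<and>
                   (\<forall>i. pd i (\<lambda>y. U y s) differentiable at x)"
    and G_deriv: "\<forall>s>0. (G has_real_derivative g s) (at s)"
    and pde: "\<forall>x\<in>\<Omega>. \<forall>s>0. deriv (U x) s = U x s * lap (\<lambda>y. U y s) x + U x s * g s"
    and \<delta>: "\<delta> > 0" and x: "x \<in> \<Omega>" and t: "t > 0" and pos: "U x t > 0"
    and max_x: "\<forall>y\<in>\<Omega>. U y t \<le> U x t"
    and max_t: "\<forall>s\<in>{0..t}. U x s * exp (- G s) - \<delta> * s \<le> U x t * exp (- G t) - \<delta> * t"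
  shows False
proof -
  define E where "E = exp (- G t)"
  have E: "E > 0" unfolding E_def by simp
  have lap: "lap (\<lambda>y. U y t) x \<le> 0"
    by (rule lap_nonpos_at_local_max[OF oO x max_x]) (use diff_x t x in auto)
  have "(U x has_real_derivative deriv (U x) t) (at t)"
    using diff_t x t DERIV_deriv_iff_real_differentiable by blast
  moreover have "((\<lambda>s. exp (- G s)) has_real_derivative E * - g t) (at t)"
    unfolding E_def using G_deriv t by (intro DERIV_fun_exp DERIV_minus) auto
  ultimately have "((\<lambda>s. U x s * exp (- G s) - \<delta> * s) has_real_derivative
      deriv (U x) t * exp (- G t) + E * - g t * U x t - \<delta>) (at t)"
    by (rule DERIV_diff[OF DERIV_mult DERIV_cmult_Id])
  then have "deriv (U x) t * exp (- G t) + E * - g t * U x t - \<delta> \<ge> 0"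
    using max_t by (rule DERIV_nonneg_at_left_max[OF _ t])
  also have "deriv (U x) t * exp (- G t) + E * - g t * U x t - \<delta> = E * (U x t * lap (\<lambda>y. U y t) x) - \<delta>"
    using pde x t unfolding E_def by (simp add: algebra_simps)
  finally have "E * (U x t * lap (\<lambda>y. U y t) x) \<ge> \<delta>" by simp
  moreover have "E * (U x t * lap (\<lambda>y. U y t) x) \<le> 0"
    using E pos lap by (simp add: mult_nonneg_nonpos)
  ultimately show False using \<delta> by simp
qed

lemma parabolic_max_principle:
  fixes U :: "real^'n::finite \<Rightarrow> real \<Rightarrow> real" and G g :: "real \<Rightarrow> real"
  assumes bO: "bounded \<Omega>" and oO: "open \<Omega>"
    and cont: "continuous_on (closure \<Omega> \<times> {0..}) (\<lambda>p. U (fst p) (snd p))"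
    and diff_t: "\<forall>x\<in>\<Omega>. \<forall>s>0. U x differentiable at s"
    and diff_x: "\<forall>x\<in>\<Omega>. \<forall>s>0. (\<lambda>y. U y s) differentiable at x \<and>
                   (\<forall>i. pd i (\<lambda>y. U y s) differentiable at x)"
    and G_cont: "continuous_on {0..t} G"
    and G_deriv: "\<forall>s>0. (G has_real_derivative g s) (at s)"
    and pde: "\<forall>x\<in>\<Omega>. \<forall>s>0. deriv (U x) s = U x s * lap (\<lambda>y. U y s) x + U x s * g s"
    and K: "K \<ge> 0"
    and initial: "\<forall>x\<in>\<Omega>. U x 0 * exp (- G 0) \<le> K"
    and lateral: "\<forall>x\<in>frontier \<Omega>. \<forall>s\<in>{0..t}. U x s * exp (- G s) \<le> K"
    and x: "x \<in> closure \<Omega>" and t: "t \<ge> 0"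
  shows "U x t * exp (- G t) \<le> K"
proof (rule ccontr)
  define W where "W y s = U y s * exp (- G s)" for y s
  assume "\<not> ?thesis"
  then have big: "W x t > K" unfolding W_def by simp
  \<comment> \<open>Tilting by \<open>- \<delta> s\<close> makes the time derivative strictly negative at an interior maximum.\<close>
  define \<delta> where "\<delta> = (W x t - K) / (2 * (t + 1))"
  have \<delta>: "\<delta> > 0" using big t unfolding \<delta>_def by simp
  define S where "S = closure \<Omega> \<times> {0..t}"
  have "compact S" unfolding S_def using bO by (simp add: compact_Times compact_closure)
  moreover have "continuous_on S (\<lambda>p. W (fst p) (snd p) - \<delta> * snd p)"
  proof -
    have "continuous_on S (\<lambda>p. U (fst p) (snd p))"
      using cont by (rule continuous_on_subset) (auto simp: S_def)
    moreover have "continuous_on S (\<lambda>p. G (snd p))"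
      by (rule continuous_on_compose2[OF G_cont continuous_on_snd]) (auto simp: S_def)
    ultimately show ?thesis unfolding W_def by (auto intro!: continuous_intros)
  qed
  moreover have xt: "(x, t) \<in> S" unfolding S_def using x t by auto
  ultimately obtain p where "p \<in> S"
    and p_max: "\<forall>q\<in>S. W (fst q) (snd q) - \<delta> * snd q \<le> W (fst p) (snd p) - \<delta> * snd p"
    using continuous_attains_sup[of S] by blast
  obtain xs ts where p: "p = (xs, ts)" by (cases p)
  have xs: "xs \<in> closure \<Omega>" and ts: "0 \<le> ts" "ts \<le> t"
    using \<open>p \<in> S\<close> unfolding p S_def by auto
  have max: "W y s - \<delta> * s \<le> W xs ts - \<delta> * ts" if "(y, s) \<in> S" for y s
    using p_max that unfolding p by fastforce
  have "\<delta> * t \<le> \<delta> * (t + 1)" using \<delta> by simp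
  also have "\<dots> = (W x t - K) / 2" unfolding \<delta>_def using t by (simp add: field_simps)
  finally have "W xs ts - \<delta> * ts > K" using big max[OF xt] by simp
  moreover have "\<delta> * ts \<ge> 0" using \<delta> ts by simp
  ultimately have W_big: "W xs ts > K" by linarith
  have xs_in: "xs \<in> \<Omega>"
  proof (rule ccontr)
    assume "xs \<notin> \<Omega>"
    then have "xs \<in> frontier \<Omega>" using xs oO by (simp add: frontier_def interior_open)
    then show False using lateral ts W_big unfolding W_def by force
  qed
  have ts_pos: "ts > 0"
    using ts initial xs_in W_big unfolding W_def by (metis not_le order.order_iff_strict)
  have "U xs ts * exp (- G ts) > 0" using W_big K unfolding W_def by simp
  then have U_pos: "U xs ts > 0" by (simp add: zero_less_mult_iff)
  have "\<forall>y\<in>\<Omega>. U y ts \<le> U xs ts"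
  proof
    fix y assume "y \<in> \<Omega>"
    then have "(y, ts) \<in> S" using ts closure_subset by (auto simp: S_def)
    then show "U y ts \<le> U xs ts" using max unfolding W_def by fastforce
  qed
  moreover have "\<forall>s\<in>{0..ts}. W xs s - \<delta> * s \<le> W xs ts - \<delta> * ts"
    using max xs ts by (auto simp: S_def)
  ultimately show False
    using tilted_solution_no_interior_max[OF oO diff_t diff_x G_deriv pde \<delta> xs_in ts_pos U_pos]
    unfolding W_def by blast
qed

lemma classical_sol_bounded:
  fixes u :: "real^'n::finite \<Rightarrow> real \<Rightarrow> real" and T :: ereal
  assumes bO: "bounded \<Omega>" and oO: "open \<Omega>" and \<epsilon>: "0 < \<epsilon>" "\<epsilon> \<le> 1"
    and sol: "classical_sol \<Omega> \<epsilon> u0 u"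
    and M: "\<forall>x\<in>\<Omega>. u0 x \<le> M" and B: "0 \<le> B"
    and energy: "(\<integral>\<^sup>+ s\<in>{s. 0 \<le> s \<and> ereal s < T}. ennreal (dirichlet \<Omega> (\<lambda>y. u y s)) \<partial>lborel)
                   \<le> ennreal B"
    and x: "x \<in> \<Omega>" and t: "0 \<le> t" "ereal t < T"
  shows "u x t \<le> max M 1 * exp B"
proof -
  have C21: "C21 \<Omega> u"
    and pde: "\<forall>x\<in>\<Omega>. \<forall>s>0. deriv (u x) s =
         u x s * lap (\<lambda>y. u y s) x + u x s * rho \<epsilon> (dirichlet \<Omega> (\<lambda>y. u y s))"
    and lateral: "\<forall>x\<in>frontier \<Omega>. \<forall>s\<ge>0. u x s = \<epsilon>"
    and initial: "\<forall>x\<in>closure \<Omega>. u x 0 = u0 x"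
    using sol unfolding classical_sol_def by blast+
  have cont: "continuous_on (closure \<Omega> \<times> {0..}) (\<lambda>p. u (fst p) (snd p))"
    and diff_t: "\<forall>x\<in>\<Omega>. \<forall>s>0. u x differentiable at s"
    and diff_x: "\<forall>is. length is < 2 \<longrightarrow> (\<forall>x\<in>\<Omega>. \<forall>s>0. iter_pd is (\<lambda>y. u y s) differentiable at x)"
    using C21 unfolding C21_def by blast+
  obtain D where D_cont: "continuous_on {0..} D" and D_nonneg: "\<forall>s\<ge>0. D s \<ge> 0"
    and D_eq: "\<forall>s>0. dirichlet \<Omega> (\<lambda>y. u y s) = D s"
    using C21_dirichlet_continuous[OF bO oO C21] by blast
  define g where "g s = min (D s) (1 / \<epsilon>)" for s
  define G where "G s = integral {0..s} g" for s
  have g_cont: "continuous_on {0..} g" unfolding g_def using D_cont by (auto intro!: continuous_intros)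
  have g_int: "g integrable_on {0..s}" for s
    by (rule integrable_continuous_real, rule continuous_on_subset[OF g_cont]) auto
  have G_nonneg: "G s \<ge> 0" if "s \<ge> 0" for s
    unfolding G_def using g_int D_nonneg \<epsilon>(1) by (intro integral_nonneg) (auto simp: g_def)
  have G_deriv: "\<forall>s>0. (G has_real_derivative g s) (at s)"
  proof (intro allI impI)
    fix s :: real assume "s > 0"
    then have "(G has_real_derivative g s) (at s within {0..s+1})"
      unfolding G_def by (intro integral_has_real_derivative continuous_on_subset[OF g_cont]) auto
    moreover have "at s within {0..s+1} = at s" using \<open>s > 0\<close> by (intro at_within_Icc_at) auto
    ultimately show "(G has_real_derivative g s) (at s)" by simp
  qed
  have "G t \<le> integral {0..t} D"
    unfolding G_def
    by (rule integral_le[OF g_int integrable_continuous_real]) (auto simp: g_def intro: continuous_on_subset[OF D_cont])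
  also have "\<dots> \<le> B"
    using integral_le_nn_integral_bound[OF D_cont D_nonneg _ t B energy] D_eq by simp
  finally have G_le: "G t \<le> B" .
  have "u x t * exp (- G t) \<le> max M 1"
  proof (rule parabolic_max_principle[OF bO oO cont diff_t _ _ G_deriv])
    show "\<forall>x\<in>\<Omega>. \<forall>s>0. (\<lambda>y. u y s) differentiable at x \<and> (\<forall>i. pd i (\<lambda>y. u y s) differentiable at x)"
      using diff_x[rule_format, of "[]"] diff_x[rule_format, of "[_]"] by simp
    show "continuous_on {0..t} G" unfolding G_def by (rule indefinite_integral_continuous_1[OF g_int])
    show "\<forall>x\<in>\<Omega>. \<forall>s>0. deriv (u x) s = u x s * lap (\<lambda>y. u y s) x + u x s * g s"
      using pde D_eq by (simp add: g_def rho_def)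
    show "\<forall>x\<in>\<Omega>. u x 0 * exp (- G 0) \<le> max M 1"
      using initial M closure_subset by (fastforce simp: G_def le_max_iff_disj)
    show "\<forall>x\<in>frontier \<Omega>. \<forall>s\<in>{0..t}. u x s * exp (- G s) \<le> max M 1"
    proof (intro ballI)
      fix x s assume "x \<in> frontier \<Omega>" "s \<in> {0..t}"
      then have "u x s = \<epsilon>" "exp (- G s) \<le> 1" using lateral G_nonneg by auto
      then have "u x s * exp (- G s) \<le> 1" using \<epsilon> by (simp add: mult_le_one)
      then show "u x s * exp (- G s) \<le> max M 1" by simp
    qed
  qed (use x t closure_subset in auto)
  then have "u x t \<le> max M 1 * exp (G t)" by (simp add: exp_minus field_simps)
  also have "\<dots> \<le> max M 1 * exp B" using G_le by (intro mult_left_mono) auto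
  finally show ?thesis .
qed

theorem lemma2p3:
  fixes \<Omega> :: "(real^'n::finite) set"
    and eps :: "nat \<Rightarrow> real"
    and u0 :: "nat \<Rightarrow> real^'n \<Rightarrow> real"
    and u :: "nat \<Rightarrow> real^'n \<Rightarrow> real \<Rightarrow> real"
  assumes dom: "smooth_bounded_domain \<Omega>"
    and eps_range: "\<forall>j. 0 < eps j \<and> eps j < 1"
    and eps_dec: "decseq eps"
    and eps_lim: "eps \<longlonglongrightarrow> 0"
    and init: "\<forall>j. init_ok \<Omega> (eps j) (u0 j)"
    and sol: "\<forall>j. classical_sol \<Omega> (eps j) (u0 j) (u j)"
  shows "\<forall>M>0. \<forall>B>0. \<exists>C>0. \<forall>j. \<forall>T::ereal. T > 0 \<longrightarrow>
           (\<forall>x\<in>\<Omega>. u0 j x \<le> M) \<longrightarrow>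
           (\<integral>\<^sup>+ t\<in>{t. 0 \<le> t \<and> ereal t < T}.
               ennreal (dirichlet \<Omega> (\<lambda>y. u j y t)) \<partial>lborel) \<le> ennreal B \<longrightarrow>
           (\<forall>x\<in>\<Omega>. \<forall>t. 0 \<le> t \<and> ereal t < T \<longrightarrow> u j x t \<le> C)"
proof (intro allI impI)
  fix M B :: real assume "M > 0" "B > 0"
  have bO: "bounded \<Omega>" and oO: "open \<Omega>" using dom unfolding smooth_bounded_domain_def by auto
  show "\<exists>C>0. \<forall>j. \<forall>T::ereal. T > 0 \<longrightarrow>
           (\<forall>x\<in>\<Omega>. u0 j x \<le> M) \<longrightarrow>
           (\<integral>\<^sup>+ t\<in>{t. 0 \<le> t \<and> ereal t < T}.
               ennreal (dirichlet \<Omega> (\<lambda>y. u j y t)) \<partial>lborel) \<le> ennreal B \<longrightarrow>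
           (\<forall>x\<in>\<Omega>. \<forall>t. 0 \<le> t \<and> ereal t < T \<longrightarrow> u j x t \<le> C)"
  proof (intro exI[of _ "max M 1 * exp B"] conjI allI impI ballI)
    fix j T x t
    assume "\<forall>x\<in>\<Omega>. u0 j x \<le> M" "x \<in> \<Omega>" "0 \<le> t \<and> ereal t < T"
      "(\<integral>\<^sup>+ t\<in>{t. 0 \<le> t \<and> ereal t < T}. ennreal (dirichlet \<Omega> (\<lambda>y. u j y t)) \<partial>lborel)
         \<le> ennreal B"
    then show "u j x t \<le> max M 1 * exp B"
      using classical_sol_bounded[OF bO oO _ _ sol[rule_format, of j]] eps_range \<open>B > 0\<close>
      by (simp add: less_imp_le)
  qed simp
qed

end
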